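(* Let $n\geq m\geq 1$ and let $\mathcal{C},\mathcal{D}\subseteq\binom{[n]}{m}$ be such that $\mathcal{S}^{tnz}_{\mathcal{C}}(\mathbb{R})$ and $\mathcal{S}^{tnz}_{\mathcal{D}}(\mathbb{R})$ are non-empty. Then these strata lie in the same orbit of the action of $(\mathbb{R}^* )^n\rtimes S_n$ on $\mathcal{S}^{tnz}_{mn}(\mathbb{R})$ if and only if for any two matrices $M=(v_1,\dots,v_n),N=(w_1,\dots,w_n)\in Mat^{tnz}_{mn}(\mathbb{R})$ with $GL_m(\mathbb{R})M\in\mathcal{S}^{tnz}_{\mathcal{C}}(\mathbb{R})$, $GL_m(\mathbb{R})N\in\mathcal{S}^{tnz}_{\mathcal{D}}(\mathbb{R})$, the sets $\{\pm v_1,\dots,\pm v_n\}$ and $\{\pm w_1,\dots,\pm w_n\}$ are isomorphic antipodal point arrangements.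
   Context: A point arrangement $S\subset\mathbb{R}^m$ is generic if every subset of cardinality at most $m$ is linearly independent. A (conventional) antipodal point arrangement of cardinality $2n$ is a set $\{\pm v_1,\dots,\pm v_n\}\subset\mathbb{R}^m$ ($n\ge m$) such that $\{v_1,\dots,v_n\}$ is a generic point arrangement; $\{v,-v\}$ is called an antipodal pair. Two antipodal arrangements $S_1,S_2$ are isomorphic if there is a bijection $\sigma:S_1\to S_2$ with $\sigma(-v)=-\sigma(v)$ for all $v\in S_1$ such that for every $(m+1)$-subset $\{v_{i_1},\dots,v_{i_{m+1}}\}\subseteq S_1$ containing no antipodal pair, writing $v_{i_{m+1}}=\sum_{j=1}^m a_jv_{i_j}$ and $\sigma(v_{i_{m+1}})=\sum_{j=1}^m b_j\sigma(v_{i_j})$, one has: $a_j>0$ for all $j$ if and only if $b_j>0$ for all $j$. $Mat^{tnz}_{mn}(\mathbb{R})$ is the set of real $m\times n$ matrices with all maximal minors $\Delta_I(M)$, $I\in\binom{[n]}{m}$, nonzero; $Gr^{tnz}_{mn}(\mathbb{R})=GL_m(\mathbb{R})\backslash Mat^{tnz}_{mn}(\mathbb{R})$. For $\mathcal{C}\subseteq\binom{[n]}{m}$, the stratum $\mathcal{S}^{tnz}_{\mathcal{C}}(\mathbb{R})$ is the set of $GL_m(\mathbb{R})M$ with either ($\Delta_I(M)>0$ for $I\in\mathcal{C}$ and $<0$ for $I\notin\mathcal{C}$) or ($\Delta_I(M)<0$ for $I\in\mathcal{C}$ and $>0$ for $I\notin\mathcal{C}$); $\mathcal{S}^{tnz}_{mn}(\mathbb{R})$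 is the set of non-empty strata. The group $(\mathbb{R}^* )^n\rtimes S_n$ has multiplication $((s_i),\tau)\cdot((t_i),\sigma)=((s_{\sigma(i)}t_i)_i,\tau\sigma)$ and acts on $Gr^{tnz}_{mn}(\mathbb{R})$ by $((t_1,\dots,t_n),\sigma)\bullet GL_m(\mathbb{R})(v_1,\dots,v_n)=GL_m(\mathbb{R})(t_{\sigma^{-1}(1)}v_{\sigma^{-1}(1)},\dots,t_{\sigma^{-1}(n)}v_{\sigma^{-1}(n)})$; this induces an action on $\mathcal{S}^{tnz}_{mn}(\mathbb{R})$ sending the stratum of $GL_m(\mathbb{R})M$ to the stratum of its image. *)

theory Defs
  imports Complex_Main "HOL-Combinatorics.Permutations"
begin

text \<open>An m x n real matrix is a function M :: nat => nat => real,
  M r j = entry in row r < m, column j < n (entries outside the range are ignored).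
  Columns are indexed 0..<n (so [n] is {..<n}); row coordinates 0..<m.\<close>

definition detn :: "nat \<Rightarrow> (nat \<Rightarrow> nat \<Rightarrow> real) \<Rightarrow> real" where
  "detn m A = (\<Sum>p | p permutes {..<m}. of_int (sign p) * (\<Prod>i<m. A i (p i)))"

definition msubsets :: "nat \<Rightarrow> nat \<Rightarrow> nat set set" where
  "msubsets m n = {I. I \<subseteq> {..<n} \<and> card I = m}"

definition minor :: "nat \<Rightarrow> (nat \<Rightarrow> nat \<Rightarrow> real) \<Rightarrow> nat set \<Rightarrow> real" where
  "minor m M I = detn m (\<lambda>r k. M r (sorted_list_of_set I ! k))"

definition tnz :: "nat \<Rightarrow> nat \<Rightarrow> (nat \<Rightarrow> nat \<Rightarrow> real) \<Rightarrow> bool" where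
  "tnz m n M \<longleftrightarrow> (\<forall>I\<in>msubsets m n. minor m M I \<noteq> 0)"

text \<open>GL_m(R) M lies in the stratum S^tnz_C(R) (the condition is GL_m-invariant).\<close>
definition in_stratum :: "nat \<Rightarrow> nat \<Rightarrow> nat set set \<Rightarrow> (nat \<Rightarrow> nat \<Rightarrow> real) \<Rightarrow> bool" where
  "in_stratum m n C M \<longleftrightarrow> tnz m n M \<and>
     ((\<forall>I\<in>msubsets m n. (I \<in> C \<longrightarrow> minor m M I > 0) \<and> (I \<notin> C \<longrightarrow> minor m M I < 0)) \<or>
      (\<forall>I\<in>msubsets m n. (I \<in> C \<longrightarrow> minor m M I < 0) \<and> (I \<notin> C \<longrightarrow> minor m M I > 0)))"

definition act :: "(nat \<Rightarrow> real) \<Rightarrow> (nat \<Rightarrow> nat) \<Rightarrow> (nat \<Rightarrow> nat \<Rightarrow> real) \<Rightarrow> (nat \<Rightarrow> nat \<Rightarrow> real)" where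
  "act t \<sigma> M = (\<lambda>r j. t (inv \<sigma> j) * M r (inv \<sigma> j))"

text \<open>The strata S_C and S_D lie in the same orbit of (R^*)^n x| S_n:
  some group element maps the stratum S_C onto (into) the stratum S_D.\<close>
definition same_orbit :: "nat \<Rightarrow> nat \<Rightarrow> nat set set \<Rightarrow> nat set set \<Rightarrow> bool" where
  "same_orbit m n C D \<longleftrightarrow> (\<exists>t \<sigma>. (\<forall>i<n. t i \<noteq> 0) \<and> \<sigma> permutes {..<n} \<and>
      (\<forall>M. in_stratum m n C M \<longrightarrow> in_stratum m n D (act t \<sigma> M)))"

definition generic :: "nat \<Rightarrow> nat \<Rightarrow> (nat \<Rightarrow> nat \<Rightarrow> real) \<Rightarrow> bool" where
  "generic m n M \<longleftrightarrow> (\<forall>J \<subseteq> {..<n}. card J \<le> m \<longrightarrow>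
      (\<forall>c. (\<forall>r<m. (\<Sum>j\<in>J. c j * M r j) = 0) \<longrightarrow> (\<forall>j\<in>J. c j = 0)))"

text \<open>Points of the antipodal arrangement {+-v_1,..,+-v_n}, labelled by (s,j):
  (True,j) is v_j and (False,j) is -v_j.\<close>
definition labels :: "nat \<Rightarrow> (bool \<times> nat) set" where
  "labels n = UNIV \<times> {..<n}"

definition pt :: "(nat \<Rightarrow> nat \<Rightarrow> real) \<Rightarrow> bool \<times> nat \<Rightarrow> nat \<Rightarrow> real" where
  "pt M x = (\<lambda>r. (if fst x then 1 else -1) * M r (snd x))"

definition aneg :: "bool \<times> nat \<Rightarrow> bool \<times> nat" where
  "aneg x = (\<not> fst x, snd x)"

definition no_antipodal_pair :: "(bool \<times> nat) set \<Rightarrow> bool" where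
  "no_antipodal_pair T \<longleftrightarrow> (\<forall>x\<in>T. aneg x \<notin> T)"

text \<open>p x = sum_{y in B} a_y p y with all a_y > 0 (coefficients are unique since B is a basis).\<close>
definition pos_comb :: "nat \<Rightarrow> (bool \<times> nat \<Rightarrow> nat \<Rightarrow> real) \<Rightarrow> bool \<times> nat \<Rightarrow> (bool \<times> nat) set \<Rightarrow> bool" where
  "pos_comb m p x B \<longleftrightarrow> (\<exists>a. (\<forall>y\<in>B. a y > 0) \<and> (\<forall>r<m. p x r = (\<Sum>y\<in>B. a y * p y r)))"

definition antipodal_iso :: "nat \<Rightarrow> nat \<Rightarrow> (nat \<Rightarrow> nat \<Rightarrow> real) \<Rightarrow> (nat \<Rightarrow> nat \<Rightarrow> real) \<Rightarrow> bool" where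
  "antipodal_iso m n M N \<longleftrightarrow> m \<le> n \<and> generic m n M \<and> generic m n N \<and>
     (\<exists>\<sigma>. bij_betw \<sigma> (labels n) (labels n) \<and>
        (\<forall>x\<in>labels n. \<sigma> (aneg x) = aneg (\<sigma> x)) \<and>
        (\<forall>T \<subseteq> labels n. card T = m + 1 \<longrightarrow> no_antipodal_pair T \<longrightarrow>
           (\<forall>x\<in>T. pos_comb m (pt M) x (T - {x}) \<longleftrightarrow>
                   pos_comb m (pt N) (\<sigma> x) (\<sigma> ` (T - {x})))))"

end

(*
  Both sides of the equivalence only depend on chirotopes, i.e. on the signs of the maximal
  minors up to a global sign, and a stratum is exactly a class of equal chirotopes.

  By Cramer's rule, a signed column x is a positive combination of m signed columns B with
  distinct indices iff replacing any element of B by x keeps the sign of the determinant;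
  so matrices with equal chirotopes have the same positive-combination relations among their
  signed columns. Conversely, if these relations agree, sign the columns of an m-subset I so
  that a further column b is a positive combination of them: the sign conditions show that
  sgn Delta_I(M) * sgn Delta_I(N) does not change when an element of I is exchanged for b,
  and since any two m-subsets are connected by such exchanges, the chirotopes agree.

  A group element (t, sigma) acts on the labels of the antipodal arrangement as a signed
  permutation that rescales every point by a positive factor, hence preserves positive
  combinations, and every antipodal bijection of the labels is such a signed permutation.
  Therefore isomorphisms of the arrangements of M and N correspond to group elements mapping
  the stratum of M to that of N.
*)
theory Submission
  imports Defs "Jordan_Normal_Form.Determinant"
begin

section \<open>Determinants of column selections\<close>

lemma detn_eq_det: "detn m A = det (mat m m (\<lambda>(i, j). A i j))"
  unfolding detn_def
  by (subst det_def'[of _ m])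
     (auto simp: atLeast0LessThan intro!: sum.cong prod.cong dest: permutes_in_image)

lemma mult_mat_vec_eq_sum:
  "r < m \<Longrightarrow> x \<in> carrier_vec m \<Longrightarrow>
    (mat m m (\<lambda>(i, j). A i j) *\<^sub>v x) $ r = (\<Sum>i<m. A r i * x $ i)"
  by (simp add: scalar_prod_def atLeast0LessThan)

lemma detn_cong:
  assumes "\<And>r j. r < m \<Longrightarrow> j < m \<Longrightarrow> A r j = B r j"
  shows "detn m A = detn m B"
  unfolding detn_def
  by (intro sum.cong arg_cong[where f = "\<lambda>x. _ * x"] prod.cong refl)
     (auto intro!: assms dest: permutes_in_image)

lemma detn_scale_cols: "detn m (\<lambda>r k. w k * A r k) = (\<Prod>k<m. w k) * detn m A"
  unfolding detn_def sum_distrib_left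
proof (intro sum.cong refl)
  fix p assume "p \<in> {p. p permutes {..<m}}"
  then have "(\<Prod>i<m. w (p i)) = (\<Prod>k<m. w k)"
    using prod.permute[of p "{..<m}" w] by (simp add: comp_def)
  then show "of_int (sign p) * (\<Prod>i<m. w (p i) * A i (p i)) =
      (\<Prod>k<m. w k) * (of_int (sign p) * (\<Prod>i<m. A i (p i)))"
    by (simp add: prod.distrib)
qed

lemma detn_permute_cols:
  assumes q: "q permutes {..<m}"
  shows "detn m (\<lambda>r k. A r (q k)) = of_int (sign q) * detn m A"
proof -
  let ?At = "mat m m (\<lambda>(i, j). A j i)"
  let ?P = "mat m m (\<lambda>(i, j). ?At $$ (q i, j))"
  have "transpose_mat ?At = mat m m (\<lambda>(i, j). A i j)"
    by (intro eq_matI) auto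
  then have At: "det ?At = det (mat m m (\<lambda>(i, j). A i j))"
    using det_transpose[of ?At m] by simp
  have "transpose_mat ?P = mat m m (\<lambda>(i, j). A i (q j))"
    using permutes_in_image[OF q] by (intro eq_matI) auto
  then have "det (mat m m (\<lambda>(i, j). A i (q j))) = det ?P"
    using det_transpose[of ?P m] by simp
  also have "\<dots> = signof q * det ?At"
    using q by (intro det_permute_rows) (simp_all add: atLeast0LessThan)
  finally show ?thesis
    by (simp add: detn_eq_det At)
qed

lemma detn_cramer:
  assumes k: "k < m"
  shows "detn m (\<lambda>r j. if j = k then (\<Sum>i<m. A r i * c i) else A r j) = c k * detn m A"
proof -
  let ?A = "mat m m (\<lambda>(i, j). A i j)"
  have "replace_col ?A (?A *\<^sub>v vec m c) k =
      mat m m (\<lambda>(r, j). if j = k then (\<Sum>i<m. A r i * c i) else A r j)"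
    by (rule eq_matI) (auto simp: replace_col_def scalar_prod_def atLeast0LessThan)
  then show ?thesis
    using cramer_lemma_mat[of ?A m "vec m c" k] k by (simp add: detn_eq_det)
qed

lemma detn_solvable:
  assumes "detn m A \<noteq> 0"
  shows "\<exists>c. \<forall>r<m. (\<Sum>i<m. A r i * c i) = v r"
proof -
  let ?A = "mat m m (\<lambda>(i, j). A i j)"
  have A: "?A \<in> carrier_mat m m" by simp
  have adj: "adj_mat ?A \<in> carrier_mat m m" using adj_mat(1)[OF A] .
  define x where "x = (1 / det ?A) \<cdot>\<^sub>v (adj_mat ?A *\<^sub>v vec m v)"
  have x: "x \<in> carrier_vec m" using adj by (simp add: x_def)
  have "?A *\<^sub>v x = (1 / det ?A) \<cdot>\<^sub>v (?A *\<^sub>v (adj_mat ?A *\<^sub>v vec m v))"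
    using adj by (simp add: x_def mult_mat_vec[OF A])
  also have "\<dots> = (1 / det ?A) \<cdot>\<^sub>v ((?A * adj_mat ?A) *\<^sub>v vec m v)"
    using assoc_mult_mat_vec[OF A adj, of "vec m v"] by simp
  also have "\<dots> = vec m v"
    using adj_mat(2)[OF A] assms by (auto simp: detn_eq_det smult_smult_assoc)
  finally have "(?A *\<^sub>v x) $ r = v r" if "r < m" for r
    using that by simp
  then show ?thesis
    using mult_mat_vec_eq_sum[OF _ x] by metis
qed

lemma detn_nonzero_kernel:
  assumes "detn m A \<noteq> 0" and "\<forall>r<m. (\<Sum>i<m. A r i * c i) = 0" and k: "k < m"
  shows "c k = 0"
proof -
  have "c k * detn m A = detn m (\<lambda>r j. (if j = k then 0 else 1) * A r j)"
    unfolding detn_cramer[OF k, symmetric] by (rule detn_cong) (simp add: assms(2))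
  also have "\<dots> = 0"
    using k by (simp add: detn_scale_cols prod_zero_iff)
  finally show ?thesis
    using assms(1) by simp
qed

lemma detn_cols_eq_minor:
  assumes d: "distinct js" and l: "length js = m"
  obtains \<epsilon> :: real
  where "\<epsilon> = 1 \<or> \<epsilon> = -1" and "\<And>M. detn m (\<lambda>r k. M r (js ! k)) = \<epsilon> * minor m M (set js)"
proof -
  define ss where "ss = sorted_list_of_set (set js)"
  have ss: "distinct ss" "set ss = set js" "length ss = m"
    using d l by (auto simp: ss_def distinct_card[symmetric])
  then have "mset js = mset ss"
    using d by (simp add: set_eq_iff_mset_eq_distinct)
  then obtain p where p: "p permutes {..<length ss}" "permute_list p ss = js"
    by (rule mset_eq_permutation)
  have "detn m (\<lambda>r k. M r (js ! k)) = of_int (sign p) * minor m M (set js)" for M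
  proof -
    have "detn m (\<lambda>r k. M r (js ! k)) = detn m (\<lambda>r k. M r (ss ! p k))"
      using p ss(3) by (intro detn_cong) (simp add: permute_list_nth flip: p(2))
    then show ?thesis
      using detn_permute_cols[of p m "\<lambda>r k. M r (ss ! k)"] p(1) ss(3) by (simp add: minor_def ss_def)
  qed
  then show ?thesis
    by (rule that[rotated]) (simp add: sign_def)
qed

lemma msubsets_finite: "I \<in> msubsets m n \<Longrightarrow> finite I"
  unfolding msubsets_def using finite_subset by blast

lemma sum_set_distinct_nth: "distinct xs \<Longrightarrow> (\<Sum>y\<in>set xs. f y) = (\<Sum>i<length xs. f (xs ! i))"
  by (simp add: sum_list_distinct_conv_sum_set[symmetric] sum_list_sum_nth atLeast0LessThan)

lemma tnz_generic:
  assumes M: "tnz m n M" and mn: "m \<le> n"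
  shows "generic m n M"
  unfolding generic_def
proof (intro allI impI ballI)
  fix J c j
  assume J: "J \<subseteq> {..<n}" "card J \<le> m" and zero: "\<forall>r<m. (\<Sum>j\<in>J. c j * M r j) = 0"
    and j: "j \<in> J"
  obtain I where I: "J \<subseteq> I" "I \<subseteq> {..<n}" "card I = m"
    using exists_subset_between[OF J(2) _ J(1)] mn by auto
  then have I': "I \<in> msubsets m n"
    by (simp add: msubsets_def)
  define ss where "ss = sorted_list_of_set I"
  have ss: "distinct ss" "set ss = I" "length ss = m"
    using msubsets_finite[OF I'] I(3) by (auto simp: ss_def)
  define c' where "c' y = (if y \<in> J then c y else 0)" for y
  have "(\<Sum>i<m. M r (ss ! i) * c' (ss ! i)) = 0" if "r < m" for r
  proof -
    have "(\<Sum>i<m. M r (ss ! i) * c' (ss ! i)) = (\<Sum>y\<in>I. c' y * M r y)"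
      using sum_set_distinct_nth[OF ss(1), of "\<lambda>y. c' y * M r y"] ss by (simp add: mult.commute)
    also have "\<dots> = (\<Sum>y\<in>J. c y * M r y)"
      using msubsets_finite[OF I'] I(1) by (intro sum.mono_neutral_cong_right) (auto simp: c'_def)
    finally show ?thesis
      using zero that by simp
  qed
  moreover have "detn m (\<lambda>r i. M r (ss ! i)) \<noteq> 0"
    using M I' by (simp add: tnz_def minor_def ss_def)
  moreover obtain k where k: "k < m" "ss ! k = j"
    using j I(1) ss by (metis in_set_conv_nth subsetD)
  ultimately have "c' j = 0"
    using detn_nonzero_kernel[of m "\<lambda>r i. M r (ss ! i)" "\<lambda>i. c' (ss ! i)"] by auto
  then show "c j = 0"
    using j by (simp add: c'_def)
qed

section \<open>Signed columns and positive combinations\<close>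

lemma finite_labels [simp]: "finite (labels n)"
  by (simp add: labels_def)

lemma aneg_labels [simp]: "aneg x \<in> labels n \<longleftrightarrow> x \<in> labels n"
  by (cases x) (simp add: aneg_def labels_def)

lemma no_antipodal_pair_iff_inj_on_snd: "no_antipodal_pair T \<longleftrightarrow> inj_on snd T"
proof
  assume nap: "no_antipodal_pair T"
  show "inj_on snd T"
  proof (rule inj_onI)
    fix y z assume yz: "y \<in> T" "z \<in> T" "snd y = snd z"
    show "y = z"
    proof (cases "fst y = fst z")
      case False
      then have "z = aneg y"
        using yz(3) by (cases y, cases z) (auto simp: aneg_def)
      then show ?thesis
        using nap yz unfolding no_antipodal_pair_def by blast
    qed (use yz(3) in \<open>simp add: prod_eq_iff\<close>)
  qed
next
  assume "inj_on snd T"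
  then show "no_antipodal_pair T"
    unfolding no_antipodal_pair_def by (force simp: inj_on_def aneg_def)
qed

lemma pos_comb_set_iff:
  assumes d: "distinct xs"
  shows "pos_comb m p x (set xs) \<longleftrightarrow>
    (\<exists>c. (\<forall>i<length xs. 0 < c i) \<and> (\<forall>r<m. p x r = (\<Sum>i<length xs. c i * p (xs ! i) r)))"
proof
  assume "pos_comb m p x (set xs)"
  then obtain a where "\<forall>y\<in>set xs. 0 < a y" "\<forall>r<m. p x r = (\<Sum>y\<in>set xs. a y * p y r)"
    unfolding pos_comb_def by blast
  then show "\<exists>c. (\<forall>i<length xs. 0 < c i) \<and> (\<forall>r<m. p x r = (\<Sum>i<length xs. c i * p (xs ! i) r))"
    by (intro exI[of _ "\<lambda>i. a (xs ! i)"]) (simp add: sum_set_distinct_nth[OF d])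
next
  assume "\<exists>c. (\<forall>i<length xs. 0 < c i) \<and> (\<forall>r<m. p x r = (\<Sum>i<length xs. c i * p (xs ! i) r))"
  then obtain c where c: "\<forall>i<length xs. 0 < c i" "\<forall>r<m. p x r = (\<Sum>i<length xs. c i * p (xs ! i) r)"
    by blast
  define a where "a = c \<circ> inv_into {..<length xs} ((!) xs)"
  have a: "a (xs ! i) = c i" if "i < length xs" for i
    using that d by (simp add: a_def inv_into_f_f inj_on_nth)
  then have "\<forall>y\<in>set xs. 0 < a y"
    using c(1) by (metis in_set_conv_nth)
  moreover have "\<forall>r<m. p x r = (\<Sum>y\<in>set xs. a y * p y r)"
    using c(2) a by (simp add: sum_set_distinct_nth[OF d])
  ultimately show "pos_comb m p x (set xs)"
    unfolding pos_comb_def by blast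
qed

definition signed_mlist :: "nat \<Rightarrow> nat \<Rightarrow> (bool \<times> nat) list \<Rightarrow> bool" where
  "signed_mlist m n xs \<longleftrightarrow> set xs \<subseteq> labels n \<and> distinct (map snd xs) \<and> length xs = m"

definition label_det :: "nat \<Rightarrow> (nat \<Rightarrow> nat \<Rightarrow> real) \<Rightarrow> (bool \<times> nat) list \<Rightarrow> real" where
  "label_det m M xs = detn m (\<lambda>r k. pt M (xs ! k) r)"

lemma signed_mlist_msubsets: "signed_mlist m n xs \<Longrightarrow> snd ` set xs \<in> msubsets m n"
  unfolding signed_mlist_def msubsets_def labels_def
  using distinct_card[of "map snd xs"] by auto

lemma signed_mlist_update:
  assumes "signed_mlist m n xs" and "x \<in> labels n" and "snd x \<notin> snd ` set xs"
  shows "signed_mlist m n (xs[k := x])"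
  using assms set_update_subset_insert[of xs k x]
  unfolding signed_mlist_def map_update by (auto intro!: distinct_list_update)

lemma label_det_eq_minor:
  assumes "distinct (map snd xs)" and "length xs = m"
  obtains \<epsilon> :: real where "\<epsilon> \<noteq> 0" and "\<And>M. label_det m M xs = \<epsilon> * minor m M (snd ` set xs)"
proof -
  obtain \<epsilon> :: real where \<epsilon>: "\<epsilon> = 1 \<or> \<epsilon> = -1"
    and minor: "\<And>M. detn m (\<lambda>r k. M r (map snd xs ! k)) = \<epsilon> * minor m M (snd ` set xs)"
    using detn_cols_eq_minor[of "map snd xs" m] assms by auto
  define w where "w k = (if fst (xs ! k) then 1 else -1 :: real)" for k
  have "label_det m M xs = detn m (\<lambda>r k. w k * M r (map snd xs ! k))" for M
    unfolding label_det_def by (rule detn_cong) (simp add: pt_def w_def assms(2))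
  then have "label_det m M xs = ((\<Prod>k<m. w k) * \<epsilon>) * minor m M (snd ` set xs)" for M
    by (simp add: detn_scale_cols minor)
  moreover have "(\<Prod>k<m. w k) * \<epsilon> \<noteq> 0"
    using \<epsilon> by (auto simp: w_def)
  ultimately show ?thesis
    using that by blast
qed

lemma label_det_nonzero:
  assumes "tnz m n M" and "signed_mlist m n xs"
  shows "label_det m M xs \<noteq> 0"
proof -
  have "distinct (map snd xs)" "length xs = m"
    using assms(2) by (simp_all add: signed_mlist_def)
  then obtain \<epsilon> where "\<epsilon> \<noteq> 0" "\<And>M. label_det m M xs = \<epsilon> * minor m M (snd ` set xs)"
    by (rule label_det_eq_minor) auto
  then show ?thesis
    using assms signed_mlist_msubsets by (simp add: tnz_def)
qed

lemma label_det_solvable: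
  assumes "label_det m M xs \<noteq> 0"
  obtains c where "\<forall>r<m. pt M x r = (\<Sum>i<m. c i * pt M (xs ! i) r)"
proof -
  obtain c where "\<forall>r<m. (\<Sum>i<m. pt M (xs ! i) r * c i) = pt M x r"
    using detn_solvable[of m "\<lambda>r k. pt M (xs ! k) r" "pt M x"] assms
    unfolding label_det_def by blast
  then show ?thesis
    using that[of c] by (simp add: mult.commute)
qed

lemma label_det_update:
  assumes "length xs = m" and k: "k < m"
    and x: "\<forall>r<m. pt M x r = (\<Sum>i<m. c i * pt M (xs ! i) r)"
  shows "label_det m M (xs[k := x]) = c k * label_det m M xs"
proof -
  have "label_det m M (xs[k := x]) =
      detn m (\<lambda>r j. if j = k then (\<Sum>i<m. pt M (xs ! i) r * c i) else pt M (xs ! j) r)"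
    unfolding label_det_def
    by (rule detn_cong) (use x assms(1) in \<open>auto simp: nth_list_update mult.commute\<close>)
  then show ?thesis
    unfolding label_det_def by (simp add: detn_cramer[OF k])
qed

lemma pos_comb_iff_label_det:
  assumes l: "length xs = m" and d: "distinct xs" and nz: "label_det m M xs \<noteq> 0"
  shows "pos_comb m (pt M) x (set xs) \<longleftrightarrow>
    (\<forall>k<m. 0 < label_det m M (xs[k := x]) * label_det m M xs)"
proof -
  obtain c where c: "\<forall>r<m. pt M x r = (\<Sum>i<m. c i * pt M (xs ! i) r)"
    using label_det_solvable[OF nz] .
  have "pos_comb m (pt M) x (set xs) \<longleftrightarrow> (\<forall>k<m. 0 < c k)"
  proof
    assume "pos_comb m (pt M) x (set xs)"
    then obtain a where a: "\<forall>i<m. 0 < a i" "\<forall>r<m. pt M x r = (\<Sum>i<m. a i * pt M (xs ! i) r)"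
      unfolding pos_comb_set_iff[OF d] l by blast
    have "a k * label_det m M xs = c k * label_det m M xs" if "k < m" for k
      using label_det_update[OF l that a(2)] label_det_update[OF l that c] by auto
    then show "\<forall>k<m. 0 < c k"
      using a(1) nz by simp
  qed (use c l in \<open>auto simp: pos_comb_set_iff[OF d]\<close>)
  also have "\<dots> \<longleftrightarrow> (\<forall>k<m. 0 < label_det m M (xs[k := x]) * label_det m M xs)"
  proof -
    have "0 < label_det m M xs * label_det m M xs"
      using nz by (auto simp: zero_less_mult_iff linorder_neq_iff)
    then show ?thesis
      by (simp add: label_det_update[OF l _ c] mult.assoc zero_less_mult_iff)
  qed
  finally show ?thesis .
qed

section \<open>Chirotopes and positive combinations\<close>

text \<open>The strata are the equivalence classes of this relation.\<close>
definition chirotope_equiv :: "nat \<Rightarrow> nat \<Rightarrow> (nat \<Rightarrow> nat \<Rightarrow> real) \<Rightarrow> (nat \<Rightarrow> nat \<Rightarrow> real) \<Rightarrow> bool" where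
  "chirotope_equiv m n M N \<longleftrightarrow>
     (\<exists>e. (e = 1 \<or> e = -1) \<and> (\<forall>I\<in>msubsets m n. sgn (minor m N I) = e * sgn (minor m M I)))"

text \<open>The condition on the bijection of labels in \<^const>\<open>antipodal_iso\<close>.\<close>
definition pos_comb_preserving :: "nat \<Rightarrow> nat \<Rightarrow> (bool \<times> nat \<Rightarrow> bool \<times> nat) \<Rightarrow>
    (nat \<Rightarrow> nat \<Rightarrow> real) \<Rightarrow> (nat \<Rightarrow> nat \<Rightarrow> real) \<Rightarrow> bool" where
  "pos_comb_preserving m n f M N \<longleftrightarrow>
     (\<forall>T\<subseteq>labels n. card T = m + 1 \<longrightarrow> no_antipodal_pair T \<longrightarrow>
        (\<forall>x\<in>T. pos_comb m (pt M) x (T - {x}) \<longleftrightarrow> pos_comb m (pt N) (f x) (f ` (T - {x}))))"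

lemma pos_comb_preservingD:
  assumes "pos_comb_preserving m n f M N"
    and "T \<subseteq> labels n" "card T = m + 1" "no_antipodal_pair T" "x \<in> T"
  shows "pos_comb m (pt M) x (T - {x}) \<longleftrightarrow> pos_comb m (pt N) (f x) (f ` (T - {x}))"
  using assms unfolding pos_comb_preserving_def by blast

lemma sgn_label_det_mult:
  assumes "chirotope_equiv m n M N" and xs: "signed_mlist m n xs" and ys: "signed_mlist m n ys"
  shows "sgn (label_det m N xs * label_det m N ys) = sgn (label_det m M xs * label_det m M ys)"
proof -
  obtain e where e: "e = 1 \<or> e = -1" "\<forall>I\<in>msubsets m n. sgn (minor m N I) = e * sgn (minor m M I)"
    using assms(1) unfolding chirotope_equiv_def by blast
  obtain \<epsilon> where \<epsilon>: "\<And>M. label_det m M xs = \<epsilon> * minor m M (snd ` set xs)"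
    by (rule label_det_eq_minor[of xs m]) (use xs in \<open>auto simp: signed_mlist_def\<close>)
  obtain \<delta> where \<delta>: "\<And>M. label_det m M ys = \<delta> * minor m M (snd ` set ys)"
    by (rule label_det_eq_minor[of ys m]) (use ys in \<open>auto simp: signed_mlist_def\<close>)
  show ?thesis
    using e signed_mlist_msubsets[OF xs] signed_mlist_msubsets[OF ys]
    by (elim disjE) (simp_all add: \<epsilon> \<delta> sgn_mult)
qed

lemma chirotope_equiv_imp_pos_comb_preserving:
  assumes M: "tnz m n M" and N: "tnz m n N" and equiv: "chirotope_equiv m n M N"
  shows "pos_comb_preserving m n id M N"
  unfolding pos_comb_preserving_def
proof (intro allI impI ballI)
  fix T x assume T: "T \<subseteq> labels n" "card T = m + 1" "no_antipodal_pair T" and x: "x \<in> T"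
  have "finite T"
    using T(1) finite_labels finite_subset by blast
  then obtain xs where xs: "set xs = T - {x}" "distinct xs"
    by (meson finite_Diff finite_distinct_list)
  have inj: "inj_on snd T"
    using T(3) by (simp add: no_antipodal_pair_iff_inj_on_snd)
  have l: "length xs = m"
    using distinct_card[OF xs(2)] xs(1) T(2) x \<open>finite T\<close> by simp
  have sx: "signed_mlist m n xs"
    using xs inj T(1) l by (auto simp: signed_mlist_def distinct_map intro: inj_on_subset)
  have fresh: "snd x \<notin> snd ` set xs"
    using inj x xs(1) by (auto simp: inj_on_def)
  have "0 < label_det m M (xs[k := x]) * label_det m M xs \<longleftrightarrow>
      0 < label_det m N (xs[k := x]) * label_det m N xs" for k
    using sgn_label_det_mult[OF equiv signed_mlist_update[OF sx _ fresh] sx] x T(1)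
    by (metis sgn_greater subsetD)
  then show "pos_comb m (pt M) x (T - {x}) \<longleftrightarrow> pos_comb m (pt N) (id x) (id ` (T - {x}))"
    unfolding xs(1)[symmetric] id_apply image_id
    by (simp add: pos_comb_iff_label_det[OF l xs(2) label_det_nonzero[OF M sx]]
        pos_comb_iff_label_det[OF l xs(2) label_det_nonzero[OF N sx]])
qed

lemma obtain_positive_signing:
  assumes M: "tnz m n M" and I: "I \<in> msubsets m n" and x: "x \<in> labels n" "snd x \<notin> I"
  obtains xs where "signed_mlist m n xs" "snd ` set xs = I" "pos_comb m (pt M) x (set xs)"
proof -
  define ss where "ss = sorted_list_of_set I"
  have ss: "distinct ss" "set ss = I" "length ss = m"
    using I msubsets_finite[OF I] by (auto simp: ss_def msubsets_def)
  define ys where "ys = map (Pair True) ss"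
  have ys: "signed_mlist m n ys"
    using ss I by (auto simp: signed_mlist_def ys_def labels_def msubsets_def comp_def)
  obtain c where c: "\<forall>r<m. pt M x r = (\<Sum>i<m. c i * pt M (ys ! i) r)"
    using label_det_solvable[OF label_det_nonzero[OF M ys]] .
  have c_nz: "c k \<noteq> 0" if k: "k < m" for k
  proof -
    have "snd x \<notin> snd ` set ys"
      using x(2) ss by (simp add: ys_def image_image)
    then have "label_det m M (ys[k := x]) \<noteq> 0"
      using label_det_nonzero[OF M signed_mlist_update[OF ys x(1)]] by blast
    then show ?thesis
      using label_det_update[OF _ k c] ys by (auto simp: signed_mlist_def)
  qed
  define xs where "xs = map (\<lambda>i. (0 < c i, ss ! i)) [0..<m]"
  have snd_xs: "map snd xs = ss"
    using ss(3) map_nth[of ss] by (simp add: xs_def comp_def)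
  have sx: "signed_mlist m n xs"
    using ss I snd_xs by (auto simp: signed_mlist_def xs_def labels_def msubsets_def)
  have "distinct xs"
    using sx by (simp add: signed_mlist_def distinct_map)
  moreover have "\<forall>r<m. pt M x r = (\<Sum>i<m. \<bar>c i\<bar> * pt M (xs ! i) r)"
    using c by (auto simp: xs_def ys_def ss(3) pt_def abs_if intro!: sum.cong)
  ultimately have "pos_comb m (pt M) x (set xs)"
    using c_nz sx by (auto simp: pos_comb_set_iff signed_mlist_def intro!: exI[of _ "\<lambda>i. \<bar>c i\<bar>"])
  moreover have "snd ` set xs = I"
    using snd_xs ss(2) by (metis set_map)
  ultimately show ?thesis
    using that sx by blast
qed

lemma pos_comb_preserving_id_set:
  assumes P: "pos_comb_preserving m n id M N" and xs: "signed_mlist m n xs"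
    and x: "x \<in> labels n" "snd x \<notin> snd ` set xs"
  shows "pos_comb m (pt M) x (set xs) \<longleftrightarrow> pos_comb m (pt N) x (set xs)"
proof -
  have d: "distinct (map snd xs)" and l: "length xs = m"
    using xs by (simp_all add: signed_mlist_def)
  have "x \<notin> set xs"
    using x(2) by force
  have "insert x (set xs) \<subseteq> labels n"
    using xs x(1) by (simp add: signed_mlist_def)
  moreover have "card (insert x (set xs)) = m + 1"
    using \<open>x \<notin> set xs\<close> d l by (simp add: distinct_card distinct_map)
  moreover have "no_antipodal_pair (insert x (set xs))"
    using d x(2) by (auto simp: no_antipodal_pair_iff_inj_on_snd distinct_map)
  ultimately have "pos_comb m (pt M) x (insert x (set xs) - {x}) \<longleftrightarrow>
      pos_comb m (pt N) (id x) (id ` (insert x (set xs) - {x}))"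
    by (rule pos_comb_preservingD[OF P]) simp
  then show ?thesis
    using \<open>x \<notin> set xs\<close> by simp
qed

lemma sgn_mult_eq_if_pos:
  fixes a b c d e :: real
  assumes "0 < e * (a * b)" and "0 < e * (c * d)"
  shows "sgn a * sgn c = sgn b * sgn d"
  using assms by (auto simp: zero_less_mult_iff mult_less_0_iff sgn_if)

lemma pos_comb_preserving_exchange:
  assumes M: "tnz m n M" and N: "tnz m n N" and P: "pos_comb_preserving m n id M N"
    and I: "I \<in> msubsets m n" and a: "a \<in> I" and b: "b < n" "b \<notin> I"
  shows "sgn (minor m M (insert b (I - {a}))) * sgn (minor m N (insert b (I - {a}))) =
    sgn (minor m M I) * sgn (minor m N I)"
proof -
  define x where "x = (True, b)"
  have x: "x \<in> labels n" "snd x \<notin> I"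
    using b by (simp_all add: x_def labels_def)
  obtain xs where xs: "signed_mlist m n xs" "snd ` set xs = I" and pos: "pos_comb m (pt M) x (set xs)"
    by (rule obtain_positive_signing[OF M I x]) auto
  have l: "length xs = m" and d: "distinct (map snd xs)"
    using xs(1) by (simp_all add: signed_mlist_def)
  have pos': "pos_comb m (pt N) x (set xs)"
    using pos pos_comb_preserving_id_set[OF P xs(1) x(1)] x(2) xs(2) by simp
  obtain k where k: "k < m" "snd (xs ! k) = a"
    using a xs(2) l by (metis imageE in_set_conv_nth)
  have xs': "signed_mlist m n (xs[k := x])"
    using signed_mlist_update[OF xs(1) x(1)] x(2) xs(2) by blast
  have J: "snd ` set (xs[k := x]) = insert b (I - {a})"
    using set_update_distinct[OF d, of k b] k l xs(2) by (simp add: x_def map_update flip: set_map)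
  have "0 < label_det m M (xs[k := x]) * label_det m M xs"
    "0 < label_det m N (xs[k := x]) * label_det m N xs"
    using pos pos' k(1) l d
    by (simp_all add: pos_comb_iff_label_det label_det_nonzero[OF M xs(1)]
        label_det_nonzero[OF N xs(1)] distinct_map)
  moreover obtain \<epsilon> where \<epsilon>: "\<And>M. label_det m M xs = \<epsilon> * minor m M (snd ` set xs)"
    by (rule label_det_eq_minor[OF d l]) auto
  moreover obtain \<delta> where \<delta>: "\<And>M. label_det m M (xs[k := x]) = \<delta> * minor m M (snd ` set (xs[k := x]))"
    by (rule label_det_eq_minor[of "xs[k := x]" m]) (use xs' in \<open>auto simp: signed_mlist_def\<close>)
  ultimately show ?thesis
    by (intro sgn_mult_eq_if_pos[of "\<delta> * \<epsilon>"]) (simp_all add: J xs(2) algebra_simps)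
qed

lemma msubsets_exchange:
  assumes I: "I \<in> msubsets m n" and "a \<in> I" "b < n" "b \<notin> I"
  shows "insert b (I - {a}) \<in> msubsets m n"
proof -
  have fin: "finite I"
    using I by (rule msubsets_finite)
  have I': "card I = m" "I \<subseteq> {..<n}"
    using I by (simp_all add: msubsets_def)
  then have "0 < m"
    using fin assms(2) card_gt_0_iff by blast
  then show ?thesis
    using fin I' assms(2-4) by (auto simp: msubsets_def card_Diff_singleton)
qed

lemma msubsets_exchange_invariant_const:
  assumes inv: "\<And>I a b. I \<in> msubsets m n \<Longrightarrow> a \<in> I \<Longrightarrow> b < n \<Longrightarrow> b \<notin> I \<Longrightarrow>
      f (insert b (I - {a})) = f I"
    and I: "I \<in> msubsets m n" and J: "J \<in> msubsets m n"
  shows "f I = f J"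
  using I
proof (induction "card (J - I)" arbitrary: I rule: less_induct)
  case less
  have fin: "finite I" "finite J"
    using less.prems J by (simp_all add: msubsets_finite)
  have card: "card I = m" "card J = m" and sub: "J \<subseteq> {..<n}"
    using less.prems J by (simp_all add: msubsets_def)
  show ?case
  proof (cases "J \<subseteq> I")
    case True
    then show ?thesis
      using card_subset_eq[OF fin(1) True] card by simp
  next
    case False
    then obtain b where b: "b \<in> J" "b \<notin> I" by blast
    have "\<not> I \<subseteq> J"
    proof
      assume "I \<subseteq> J"
      then have "I = J"
        by (rule card_subset_eq[OF fin(2)]) (simp add: card)
      then show False
        using b by simp
    qed
    then obtain a where a: "a \<in> I" "a \<notin> J" by blast
    define I' where "I' = insert b (I - {a})"
    have "I' \<in> msubsets m n"
      unfolding I'_def using msubsets_exchange less.prems a(1) b sub by blast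
    moreover have "card (J - I') < card (J - I)"
      using fin(2) a b by (intro psubset_card_mono) (auto simp: I'_def)
    ultimately have "f I' = f J"
      using less.hyps by blast
    moreover have "f I' = f I"
      unfolding I'_def using inv less.prems a(1) b sub by blast
    ultimately show ?thesis by simp
  qed
qed

lemma pos_comb_preserving_imp_chirotope_equiv:
  assumes M: "tnz m n M" and N: "tnz m n N" and P: "pos_comb_preserving m n id M N"
  shows "chirotope_equiv m n M N"
proof (cases "msubsets m n = {}")
  case False
  then obtain I0 where I0: "I0 \<in> msubsets m n" by blast
  define \<rho> where "\<rho> I = sgn (minor m M I) * sgn (minor m N I)" for I
  have nz: "minor m M I \<noteq> 0" "minor m N I \<noteq> 0" if "I \<in> msubsets m n" for I
    using M N that by (auto simp: tnz_def)
  have \<rho>_const: "\<rho> I = \<rho> I0" if I: "I \<in> msubsets m n" for I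
  proof (rule msubsets_exchange_invariant_const[OF _ I I0])
    fix I a b assume "I \<in> msubsets m n" "a \<in> I" "b < n" "b \<notin> I"
    then show "\<rho> (insert b (I - {a})) = \<rho> I"
      unfolding \<rho>_def by (rule pos_comb_preserving_exchange[OF M N P])
  qed
  have "sgn (minor m N I) = \<rho> I0 * sgn (minor m M I)" if I: "I \<in> msubsets m n" for I
  proof -
    have "sgn (minor m N I) = (sgn (minor m M I) * sgn (minor m M I)) * sgn (minor m N I)"
      using nz(1)[OF I] by (simp add: sgn_if)
    also have "\<dots> = \<rho> I * sgn (minor m M I)"
      by (simp add: \<rho>_def)
    finally show ?thesis
      using \<rho>_const[OF I] by simp
  qed
  moreover have "\<rho> I0 = 1 \<or> \<rho> I0 = -1"
    using nz[OF I0] by (auto simp: \<rho>_def sgn_if)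
  ultimately show ?thesis
    unfolding chirotope_equiv_def by blast
qed (auto simp: chirotope_equiv_def intro: exI[of _ 1])

section \<open>Strata and the group action\<close>

lemma in_stratum_iff_sgn:
  "in_stratum m n C M \<longleftrightarrow>
    (\<exists>s. (s = 1 \<or> s = -1) \<and> (\<forall>I\<in>msubsets m n. sgn (minor m M I) = s * (if I \<in> C then 1 else -1)))"
proof
  assume "in_stratum m n C M"
  then consider
      "\<forall>I\<in>msubsets m n. (I \<in> C \<longrightarrow> 0 < minor m M I) \<and> (I \<notin> C \<longrightarrow> minor m M I < 0)"
    | "\<forall>I\<in>msubsets m n. (I \<in> C \<longrightarrow> minor m M I < 0) \<and> (I \<notin> C \<longrightarrow> 0 < minor m M I)"
    unfolding in_stratum_def by blast
  then show "\<exists>s. (s = 1 \<or> s = -1) \<and> (\<forall>I\<in>msubsets m n. sgn (minor m M I) = s * (if I \<in> C then 1 else -1))"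
  proof cases
    case 1
    then show ?thesis by (intro exI[of _ 1]) auto
  next
    case 2
    then show ?thesis by (intro exI[of _ "-1"]) auto
  qed
next
  assume "\<exists>s. (s = 1 \<or> s = -1) \<and> (\<forall>I\<in>msubsets m n. sgn (minor m M I) = s * (if I \<in> C then 1 else -1))"
  then obtain s where s: "s = 1 \<or> s = -1"
    and sgn: "\<forall>I\<in>msubsets m n. sgn (minor m M I) = s * (if I \<in> C then 1 else -1)"
    by blast
  have "tnz m n M"
    unfolding tnz_def
  proof
    fix I assume "I \<in> msubsets m n"
    then have "sgn (minor m M I) \<noteq> 0"
      using sgn s by auto
    then show "minor m M I \<noteq> 0"
      by auto
  qed
  moreover have
    "(\<forall>I\<in>msubsets m n. (I \<in> C \<longrightarrow> 0 < minor m M I) \<and> (I \<notin> C \<longrightarrow> minor m M I < 0)) \<or>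
     (\<forall>I\<in>msubsets m n. (I \<in> C \<longrightarrow> minor m M I < 0) \<and> (I \<notin> C \<longrightarrow> 0 < minor m M I))"
  proof (cases "s = 1")
    case True
    then show ?thesis
      using sgn by (auto simp: sgn_1_pos sgn_1_neg)
  next
    case False
    then show ?thesis
      using s sgn by (auto simp: sgn_1_pos sgn_1_neg)
  qed
  ultimately show "in_stratum m n C M"
    unfolding in_stratum_def by blast
qed

lemma chirotope_equiv_if_in_stratum:
  assumes "in_stratum m n C M" and "in_stratum m n C N"
  shows "chirotope_equiv m n M N"
proof -
  obtain s t where "s = 1 \<or> s = -1" "t = 1 \<or> t = -1"
    and "\<forall>I\<in>msubsets m n. sgn (minor m M I) = s * (if I \<in> C then 1 else -1)"
    and "\<forall>I\<in>msubsets m n. sgn (minor m N I) = t * (if I \<in> C then 1 else -1)"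
    using assms unfolding in_stratum_iff_sgn by blast
  then show ?thesis
    unfolding chirotope_equiv_def by (intro exI[of _ "s * t"]) auto
qed

lemma in_stratum_chirotope_equiv:
  assumes "in_stratum m n C M" and "chirotope_equiv m n M N"
  shows "in_stratum m n C N"
proof -
  obtain s e where "s = 1 \<or> s = -1" "e = 1 \<or> e = -1"
    and "\<forall>I\<in>msubsets m n. sgn (minor m M I) = s * (if I \<in> C then 1 else -1)"
    and "\<forall>I\<in>msubsets m n. sgn (minor m N I) = e * sgn (minor m M I)"
    using assms unfolding in_stratum_iff_sgn chirotope_equiv_def by blast
  then show ?thesis
    unfolding in_stratum_iff_sgn by (intro exI[of _ "e * s"]) auto
qed

lemma chirotope_equiv_trans:
  assumes "chirotope_equiv m n M N" and "chirotope_equiv m n N P"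
  shows "chirotope_equiv m n M P"
proof -
  obtain e f where "e = 1 \<or> e = -1" "f = 1 \<or> f = -1"
    and "\<forall>I\<in>msubsets m n. sgn (minor m N I) = e * sgn (minor m M I)"
    and "\<forall>I\<in>msubsets m n. sgn (minor m P I) = f * sgn (minor m N I)"
    using assms unfolding chirotope_equiv_def by blast
  then show ?thesis
    unfolding chirotope_equiv_def by (intro exI[of _ "f * e"]) auto
qed

lemma minor_act:
  assumes t: "\<forall>i<n. t i \<noteq> 0" and p: "pp permutes {..<n}" and I: "I \<in> msubsets m n"
  obtains g J where "g \<noteq> 0" "J \<in> msubsets m n" "\<And>M. minor m (act t pp M) I = g * minor m M J"
proof -
  define ss where "ss = sorted_list_of_set I"
  have ss: "distinct ss" "set ss = I" "length ss = m"
    using I msubsets_finite[OF I] by (auto simp: ss_def msubsets_def)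
  have ip: "inv_into UNIV pp permutes {..<n}"
    using p by (rule permutes_inv)
  define js where "js = map (inv_into UNIV pp) ss"
  have "set js \<subseteq> inv_into UNIV pp ` {..<n}"
    using I ss(2) by (auto simp: js_def msubsets_def)
  then have js: "distinct js" "length js = m" "set js \<subseteq> {..<n}"
    using ss inj_on_subset[OF permutes_inj[OF ip] subset_UNIV]
    by (simp_all add: js_def distinct_map permutes_image[OF ip])
  obtain \<epsilon> :: real where \<epsilon>: "\<epsilon> = 1 \<or> \<epsilon> = -1"
    and minor: "\<And>M. detn m (\<lambda>r k. M r (js ! k)) = \<epsilon> * minor m M (set js)"
    by (rule detn_cols_eq_minor[OF js(1,2)]) auto
  have "minor m (act t pp M) I = ((\<Prod>k<m. t (js ! k)) * \<epsilon>) * minor m M (set js)" for M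
  proof -
    have "minor m (act t pp M) I = detn m (\<lambda>r k. t (js ! k) * M r (js ! k))"
      unfolding minor_def act_def by (rule detn_cong) (simp add: js_def ss_def[symmetric] ss(3))
    then show ?thesis
      by (simp add: detn_scale_cols minor)
  qed
  moreover have "t (js ! k) \<noteq> 0" if "k < m" for k
  proof -
    have "js ! k \<in> {..<n}"
      using js(2,3) nth_mem[of k js] that by blast
    then show ?thesis
      using t by simp
  qed
  then have "(\<Prod>k<m. t (js ! k)) * \<epsilon> \<noteq> 0"
    using \<epsilon> by auto
  moreover have "set js \<in> msubsets m n"
    using js distinct_card by (auto simp: msubsets_def)
  ultimately show ?thesis
    using that by blast
qed

lemma tnz_act:
  assumes "\<forall>i<n. t i \<noteq> 0" and "pp permutes {..<n}" and "tnz m n M"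
  shows "tnz m n (act t pp M)"
  unfolding tnz_def
proof
  fix I assume I: "I \<in> msubsets m n"
  obtain g J where "g \<noteq> 0" "J \<in> msubsets m n" "\<And>M. minor m (act t pp M) I = g * minor m M J"
    by (rule minor_act[OF assms(1,2) I]) auto
  then show "minor m (act t pp M) I \<noteq> 0"
    using assms(3) by (simp add: tnz_def)
qed

lemma chirotope_equiv_act:
  assumes t: "\<forall>i<n. t i \<noteq> 0" and p: "pp permutes {..<n}" and equiv: "chirotope_equiv m n M N"
  shows "chirotope_equiv m n (act t pp M) (act t pp N)"
proof -
  obtain e where e: "e = 1 \<or> e = -1" "\<forall>I\<in>msubsets m n. sgn (minor m N I) = e * sgn (minor m M I)"
    using equiv unfolding chirotope_equiv_def by blast
  have "sgn (minor m (act t pp N) I) = e * sgn (minor m (act t pp M) I)" if I: "I \<in> msubsets m n" for I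
  proof -
    obtain g J where "g \<noteq> 0" "J \<in> msubsets m n" "\<And>M. minor m (act t pp M) I = g * minor m M J"
      by (rule minor_act[OF t p I]) auto
    then show ?thesis
      using e(2) by (simp add: sgn_mult)
  qed
  then show ?thesis
    unfolding chirotope_equiv_def using e(1) by blast
qed

section \<open>Signed permutations of the labels\<close>

definition relabel :: "(nat \<Rightarrow> real) \<Rightarrow> (nat \<Rightarrow> nat) \<Rightarrow> bool \<times> nat \<Rightarrow> bool \<times> nat" where
  "relabel t pp y = (fst y = (0 < t (snd y)), pp (snd y))"

definition antipodal_bij :: "nat \<Rightarrow> (bool \<times> nat \<Rightarrow> bool \<times> nat) \<Rightarrow> bool" where
  "antipodal_bij n f \<longleftrightarrow> bij_betw f (labels n) (labels n) \<and> (\<forall>x\<in>labels n. f (aneg x) = aneg (f x))"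

lemma pt_act_relabel:
  assumes t: "\<forall>i<n. t i \<noteq> 0" and p: "pp permutes {..<n}" and y: "y \<in> labels n"
  shows "pt (act t pp M) (relabel t pp y) r = \<bar>t (snd y)\<bar> * pt M y r"
proof -
  obtain b j where y': "y = (b, j)" and j: "j < n"
    using y by (auto simp: labels_def)
  have "inv_into UNIV pp (pp j) = j"
    using permutes_inverses(2)[OF p] by simp
  then have "pt (act t pp M) (relabel t pp y) r = (if b = (0 < t j) then 1 else -1) * (t j * M r j)"
    by (simp add: y' pt_def relabel_def act_def)
  then show ?thesis
    using t j by (cases b) (auto simp: y' pt_def abs_if)
qed

lemma antipodal_bij_relabel:
  assumes p: "pp permutes {..<n}"
  shows "antipodal_bij n (relabel t pp)"
proof -
  have ip: "inv_into UNIV pp permutes {..<n}"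
    using p by (rule permutes_inv)
  have "pp j < n" "inv_into UNIV pp j < n" if "j < n" for j
    using permutes_in_image[OF p, of j] permutes_in_image[OF ip, of j] that by simp_all
  then have "bij_betw (relabel t pp) (labels n) (labels n)"
    by (intro bij_betw_byWitness[where f' = "relabel (t \<circ> inv_into UNIV pp) (inv_into UNIV pp)"])
       (auto simp: relabel_def labels_def permutes_inverses[OF p])
  then show ?thesis
    by (auto simp: antipodal_bij_def relabel_def aneg_def)
qed

lemma antipodal_bij_inv:
  assumes f: "antipodal_bij n f"
  shows "antipodal_bij n (inv_into (labels n) f)"
proof -
  have bij: "bij_betw f (labels n) (labels n)"
    using f by (simp add: antipodal_bij_def)
  have "inv_into (labels n) f (aneg x) = aneg (inv_into (labels n) f x)" if x: "x \<in> labels n" for x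
  proof -
    let ?y = "inv_into (labels n) f x"
    have y: "?y \<in> labels n" "f ?y = x"
      using bij x by (auto simp: bij_betw_inv_into_right bij_betw_def inv_into_into)
    then have "f (aneg ?y) = aneg x"
      using f by (simp add: antipodal_bij_def)
    then show ?thesis
      using inv_into_f_eq[of f "labels n" "aneg ?y" "aneg x"] bij y(1) by (simp add: bij_betw_def)
  qed
  then show ?thesis
    using bij_betw_inv_into[OF bij] by (simp add: antipodal_bij_def)
qed

lemma antipodal_bij_inj_on: "antipodal_bij n f \<Longrightarrow> T \<subseteq> labels n \<Longrightarrow> inj_on f T"
  unfolding antipodal_bij_def bij_betw_def by (metis inj_on_subset)

lemma antipodal_bij_image:
  assumes f: "antipodal_bij n f" and T: "T \<subseteq> labels n" "no_antipodal_pair T"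
  shows "f ` T \<subseteq> labels n" "card (f ` T) = card T" "no_antipodal_pair (f ` T)"
proof -
  have inj: "inj_on f (labels n)" and img: "f ` labels n = labels n"
    using f by (auto simp: antipodal_bij_def bij_betw_def)
  show "f ` T \<subseteq> labels n"
    using T(1) img by blast
  show "card (f ` T) = card T"
    using antipodal_bij_inj_on[OF f T(1)] by (rule card_image)
  show "no_antipodal_pair (f ` T)"
    unfolding no_antipodal_pair_def
  proof (intro ballI notI)
    fix y assume "y \<in> f ` T" "aneg y \<in> f ` T"
    then obtain u v where uv: "u \<in> T" "v \<in> T" "y = f u" "aneg y = f v" by blast
    then have "f (aneg u) = f v"
      using f T(1) by (auto simp: antipodal_bij_def)
    then have "aneg u = v"
      by (rule inj_onD[OF inj]) (use uv T(1) in auto)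
    then show False
      using T(2) uv by (auto simp: no_antipodal_pair_def)
  qed
qed

lemma antipodal_bij_neg:
  assumes "antipodal_bij n \<sigma>" and "j < n"
  shows "\<sigma> (False, j) = aneg (\<sigma> (True, j))"
proof -
  have "(True, j) \<in> labels n"
    using assms(2) by (simp add: labels_def)
  then show ?thesis
    using assms(1) unfolding antipodal_bij_def by (auto simp: aneg_def)
qed

lemma antipodal_bij_snd_inj:
  assumes \<sigma>: "antipodal_bij n \<sigma>" and jk: "j < n" "k < n"
    and "snd (\<sigma> (True, j)) = snd (\<sigma> (True, k))"
  shows "j = k"
proof -
  have "\<sigma> (True, j) = \<sigma> (True, k) \<or> \<sigma> (True, j) = \<sigma> (False, k)"
    using assms(4) antipodal_bij_neg[OF \<sigma> jk(2)] by (auto simp: aneg_def prod_eq_iff)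
  moreover have "inj_on \<sigma> (labels n)"
    using \<sigma> by (rule antipodal_bij_inj_on) simp
  ultimately show ?thesis
    using jk by (auto simp: labels_def dest: inj_onD)
qed

lemma antipodal_bij_eq_relabel:
  assumes \<sigma>: "antipodal_bij n \<sigma>"
  obtains t pp where "\<forall>i<n. t i \<noteq> 0" "pp permutes {..<n}" "\<forall>y\<in>labels n. \<sigma> y = relabel t pp y"
proof -
  have img: "\<sigma> ` labels n = labels n"
    using \<sigma> by (simp add: antipodal_bij_def bij_betw_def)
  define pp where "pp j = (if j < n then snd (\<sigma> (True, j)) else j)" for j
  define t where "t j = (if fst (\<sigma> (True, j)) then 1 else -1 :: real)" for j
  have "inj_on pp {..<n}"
    using antipodal_bij_snd_inj[OF \<sigma>] by (auto simp: pp_def intro!: inj_onI)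
  moreover have "pp j < n" if j: "j < n" for j
  proof -
    have "(True, j) \<in> labels n"
      using j by (simp add: labels_def)
    then have "\<sigma> (True, j) \<in> labels n"
      using img by blast
    then show ?thesis
      using j by (auto simp: pp_def labels_def)
  qed
  then have "pp ` {..<n} \<subseteq> {..<n}"
    by auto
  ultimately have p: "pp permutes {..<n}"
    using endo_inj_surj[of "{..<n}" pp] by (intro bij_imp_permutes) (simp_all add: bij_betw_def pp_def)
  have "\<sigma> y = relabel t pp y" if y: "y \<in> labels n" for y
  proof -
    obtain b j where y': "y = (b, j)" and j: "j < n"
      using y by (auto simp: labels_def)
    have True: "\<sigma> (True, j) = relabel t pp (True, j)"
      using j by (simp add: relabel_def t_def pp_def prod_eq_iff)
    have "\<sigma> (False, j) = relabel t pp (False, j)"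
      using antipodal_bij_neg[OF \<sigma> j] True by (simp add: relabel_def aneg_def)
    then show ?thesis
      using True y' by (cases b) auto
  qed
  moreover have "\<forall>i<n. t i \<noteq> 0"
    by (simp add: t_def)
  ultimately show ?thesis
    using that p by blast
qed

lemma pos_comb_rescale:
  assumes inj: "inj_on f B" and c: "\<forall>y\<in>insert x B. 0 < c y"
    and q: "\<forall>y\<in>insert x B. \<forall>r<m. q (f y) r = c y * p y r"
  shows "pos_comb m p x B \<longleftrightarrow> pos_comb m q (f x) (f ` B)"
proof
  assume "pos_comb m p x B"
  then obtain a where a: "\<forall>y\<in>B. 0 < a y" "\<forall>r<m. p x r = (\<Sum>y\<in>B. a y * p y r)"
    unfolding pos_comb_def by blast
  define a' where "a' z = a (inv_into B f z) * c x / c (inv_into B f z)" for z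
  have a': "a' (f y) = a y * c x / c y" if "y \<in> B" for y
    using inv_into_f_f[OF inj that] by (simp add: a'_def)
  have "q (f x) r = (\<Sum>z\<in>f ` B. a' z * q z r)" if "r < m" for r
  proof -
    have "(\<Sum>z\<in>f ` B. a' z * q z r) = (\<Sum>y\<in>B. a' (f y) * q (f y) r)"
      by (simp add: sum.reindex[OF inj])
    also have "\<dots> = (\<Sum>y\<in>B. c x * (a y * p y r))"
      using a' q c that by (intro sum.cong) auto
    also have "\<dots> = q (f x) r"
      using a(2) q that by (simp add: sum_distrib_left)
    finally show ?thesis by simp
  qed
  moreover have "\<forall>z\<in>f ` B. 0 < a' z"
    using a' a(1) c by auto
  ultimately show "pos_comb m q (f x) (f ` B)"
    unfolding pos_comb_def by blast
next
  assume "pos_comb m q (f x) (f ` B)"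
  then obtain a' where a': "\<forall>z\<in>f ` B. 0 < a' z" "\<forall>r<m. q (f x) r = (\<Sum>z\<in>f ` B. a' z * q z r)"
    unfolding pos_comb_def by blast
  define a where "a y = a' (f y) * c y / c x" for y
  have "p x r = (\<Sum>y\<in>B. a y * p y r)" if "r < m" for r
  proof -
    have "(\<Sum>y\<in>B. a y * p y r) = (\<Sum>z\<in>f ` B. a' z * q z r) / c x"
      using q that by (simp add: a_def sum_divide_distrib sum.reindex[OF inj] mult.assoc)
    also have "\<dots> = q (f x) r / c x"
      using a'(2) that by simp
    also have "\<dots> = p x r"
      using q c that by (simp add: less_imp_neq[symmetric])
    finally show ?thesis by simp
  qed
  moreover have "\<forall>y\<in>B. 0 < a y"
    using a'(1) c by (simp add: a_def)
  ultimately show "pos_comb m p x B"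
    unfolding pos_comb_def by blast
qed

lemma pos_comb_preserving_cong:
  assumes fg: "\<forall>x\<in>labels n. f x = g x" and P: "pos_comb_preserving m n f M N"
  shows "pos_comb_preserving m n g M N"
  unfolding pos_comb_preserving_def
proof (intro allI impI ballI)
  fix T x assume T: "T \<subseteq> labels n" "card T = m + 1" "no_antipodal_pair T" and x: "x \<in> T"
  have "g x = f x"
    using fg T(1) x by auto
  moreover have "g ` (T - {x}) = f ` (T - {x})"
    by (rule image_cong) (use fg T(1) in auto)
  ultimately show "pos_comb m (pt M) x (T - {x}) \<longleftrightarrow> pos_comb m (pt N) (g x) (g ` (T - {x}))"
    using pos_comb_preservingD[OF P T x] by simp
qed

lemma pos_comb_preserving_act:
  assumes t: "\<forall>i<n. t i \<noteq> 0" and p: "pp permutes {..<n}"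
  shows "pos_comb_preserving m n (relabel t pp) M (act t pp M)"
  unfolding pos_comb_preserving_def
proof (intro allI impI ballI)
  fix T x assume T: "T \<subseteq> labels n" "card T = m + 1" "no_antipodal_pair T" and x: "x \<in> T"
  have inj: "inj_on (relabel t pp) (T - {x})"
    by (rule antipodal_bij_inj_on[OF antipodal_bij_relabel[OF p]]) (use T in auto)
  have Tx: "insert x (T - {x}) \<subseteq> labels n"
    using T x by auto
  then have "\<forall>y\<in>insert x (T - {x}). 0 < \<bar>t (snd y)\<bar>"
    using t by (auto simp: labels_def)
  moreover have "\<forall>y\<in>insert x (T - {x}). \<forall>r<m.
      pt (act t pp M) (relabel t pp y) r = \<bar>t (snd y)\<bar> * pt M y r"
    using pt_act_relabel[OF t p] Tx by blast
  ultimately show "pos_comb m (pt M) x (T - {x}) \<longleftrightarrow>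
      pos_comb m (pt (act t pp M)) (relabel t pp x) (relabel t pp ` (T - {x}))"
    by (rule pos_comb_rescale[OF inj])
qed

lemma pos_comb_preserving_comp:
  assumes f: "antipodal_bij n f"
    and "pos_comb_preserving m n f M N" and "pos_comb_preserving m n g N P"
  shows "pos_comb_preserving m n (g \<circ> f) M P"
  unfolding pos_comb_preserving_def
proof (intro allI impI ballI)
  fix T x assume T: "T \<subseteq> labels n" "card T = m + 1" "no_antipodal_pair T" and x: "x \<in> T"
  have "inj_on f T"
    using f T(1) by (rule antipodal_bij_inj_on)
  then have fT: "f ` T - {f x} = f ` (T - {x})"
    using x by (auto simp: inj_on_def)
  have "pos_comb m (pt M) x (T - {x}) \<longleftrightarrow> pos_comb m (pt N) (f x) (f ` (T - {x}))"
    by (rule pos_comb_preservingD[OF assms(2) T x])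
  moreover have "pos_comb m (pt N) (f x) (f ` T - {f x}) \<longleftrightarrow> pos_comb m (pt P) (g (f x)) (g ` (f ` T - {f x}))"
    using antipodal_bij_image[OF f T(1,3)] T(2) x by (intro pos_comb_preservingD[OF assms(3)]) auto
  ultimately show "pos_comb m (pt M) x (T - {x}) \<longleftrightarrow> pos_comb m (pt P) ((g \<circ> f) x) ((g \<circ> f) ` (T - {x}))"
    by (simp add: fT image_comp)
qed

lemma pos_comb_preserving_inv:
  assumes f: "antipodal_bij n f" and P: "pos_comb_preserving m n f M N"
  shows "pos_comb_preserving m n (inv_into (labels n) f) N M"
  unfolding pos_comb_preserving_def
proof (intro allI impI ballI)
  let ?h = "inv_into (labels n) f"
  fix T x assume T: "T \<subseteq> labels n" "card T = m + 1" "no_antipodal_pair T" and x: "x \<in> T"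
  have h: "antipodal_bij n ?h"
    using f by (rule antipodal_bij_inv)
  have fh: "f (?h y) = y" if "y \<in> labels n" for y
    using bij_betw_inv_into_right[of f "labels n" "labels n" y] f that by (simp add: antipodal_bij_def)
  have "inj_on ?h T"
    using h T(1) by (rule antipodal_bij_inj_on)
  then have hT: "?h ` T - {?h x} = ?h ` (T - {x})"
    using x by (auto simp: inj_on_def)
  have "f ` ?h ` (T - {x}) = T - {x}"
    using fh T(1) by (force simp: image_image)
  moreover have "pos_comb m (pt M) (?h x) (?h ` T - {?h x}) \<longleftrightarrow>
      pos_comb m (pt N) (f (?h x)) (f ` (?h ` T - {?h x}))"
    using antipodal_bij_image[OF h T(1,3)] T(2) x by (intro pos_comb_preservingD[OF P]) auto
  moreover have "f (?h x) = x"
    using fh T(1) x by blast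
  ultimately show "pos_comb m (pt N) x (T - {x}) \<longleftrightarrow> pos_comb m (pt M) (?h x) (?h ` (T - {x}))"
    using hT by simp
qed

lemma pos_comb_preserving_id_act:
  assumes t: "\<forall>i<n. t i \<noteq> 0" and p: "pp permutes {..<n}"
    and \<sigma>: "antipodal_bij n \<sigma>" and \<sigma>_eq: "\<forall>y\<in>labels n. \<sigma> y = relabel t pp y"
    and P: "pos_comb_preserving m n \<sigma> M N"
  shows "pos_comb_preserving m n id N (act t pp M)"
proof -
  have "pos_comb_preserving m n (relabel t pp \<circ> inv_into (labels n) \<sigma>) N (act t pp M)"
    by (rule pos_comb_preserving_comp[OF antipodal_bij_inv[OF \<sigma>] pos_comb_preserving_inv[OF \<sigma> P]
          pos_comb_preserving_act[OF t p]])
  moreover have "\<forall>y\<in>labels n. (relabel t pp \<circ> inv_into (labels n) \<sigma>) y = id y"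
  proof
    fix y assume y: "y \<in> labels n"
    have "bij_betw \<sigma> (labels n) (labels n)"
      using \<sigma> by (simp add: antipodal_bij_def)
    then have "inv_into (labels n) \<sigma> y \<in> labels n" "\<sigma> (inv_into (labels n) \<sigma> y) = y"
      using y by (simp_all add: bij_betw_def inv_into_into bij_betw_inv_into_right)
    then show "(relabel t pp \<circ> inv_into (labels n) \<sigma>) y = id y"
      using \<sigma>_eq by simp
  qed
  ultimately show ?thesis
    by (rule pos_comb_preserving_cong[rotated])
qed

lemma tnz_if_in_stratum: "in_stratum m n C M \<Longrightarrow> tnz m n M"
  by (simp add: in_stratum_def)

lemma antipodal_iso_iff_pos_comb_preserving:
  assumes "m \<le> n" and "tnz m n M" and "tnz m n N"
  shows "antipodal_iso m n M N \<longleftrightarrow> (\<exists>f. antipodal_bij n f \<and> pos_comb_preserving m n f M N)"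
proof -
  have "generic m n M" "generic m n N"
    using assms tnz_generic by blast+
  then show ?thesis
    using assms(1) by (simp add: antipodal_iso_def antipodal_bij_def pos_comb_preserving_def conj_assoc)
qed

lemma same_orbit_imp_antipodal_iso:
  assumes mn: "m \<le> n" and orbit: "same_orbit m n C D"
    and M: "in_stratum m n C M" and N: "in_stratum m n D N"
  shows "antipodal_iso m n M N"
proof -
  obtain t pp where t: "\<forall>i<n. t i \<noteq> 0" and p: "pp permutes {..<n}"
    and CD: "\<forall>M. in_stratum m n C M \<longrightarrow> in_stratum m n D (act t pp M)"
    using orbit unfolding same_orbit_def by blast
  have M': "in_stratum m n D (act t pp M)"
    using CD M by blast
  then have "pos_comb_preserving m n id (act t pp M) N"
    by (intro chirotope_equiv_imp_pos_comb_preserving chirotope_equiv_if_in_stratum[OF M' N]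
        tnz_if_in_stratum[OF M'] tnz_if_in_stratum[OF N])
  then have "pos_comb_preserving m n (id \<circ> relabel t pp) M N"
    by (rule pos_comb_preserving_comp[OF antipodal_bij_relabel[OF p] pos_comb_preserving_act[OF t p]])
  then show ?thesis
    unfolding antipodal_iso_iff_pos_comb_preserving[OF mn tnz_if_in_stratum[OF M] tnz_if_in_stratum[OF N]]
    using antipodal_bij_relabel[OF p] by (intro exI[of _ "relabel t pp"]) simp
qed

lemma antipodal_iso_imp_same_orbit:
  assumes M0: "in_stratum m n C M0" and N0: "in_stratum m n D N0"
    and iso: "antipodal_iso m n M0 N0"
  shows "same_orbit m n C D"
proof -
  have "m \<le> n"
    using iso by (simp add: antipodal_iso_def)
  then obtain \<sigma> where \<sigma>: "antipodal_bij n \<sigma>" and P: "pos_comb_preserving m n \<sigma> M0 N0"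
    using iso antipodal_iso_iff_pos_comb_preserving tnz_if_in_stratum[OF M0] tnz_if_in_stratum[OF N0]
    by blast
  obtain t pp where t: "\<forall>i<n. t i \<noteq> 0" and p: "pp permutes {..<n}"
    and \<sigma>_eq: "\<forall>y\<in>labels n. \<sigma> y = relabel t pp y"
    by (rule antipodal_bij_eq_relabel[OF \<sigma>]) auto
  have "pos_comb_preserving m n id N0 (act t pp M0)"
    by (rule pos_comb_preserving_id_act[OF t p \<sigma> \<sigma>_eq P])
  then have equiv: "chirotope_equiv m n N0 (act t pp M0)"
    by (intro pos_comb_preserving_imp_chirotope_equiv tnz_if_in_stratum[OF N0]
        tnz_act[OF t p tnz_if_in_stratum[OF M0]])
  have "in_stratum m n D (act t pp M)" if M: "in_stratum m n C M" for M
  proof -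
    have "chirotope_equiv m n (act t pp M0) (act t pp M)"
      using chirotope_equiv_act[OF t p chirotope_equiv_if_in_stratum[OF M0 M]] .
    then show ?thesis
      using in_stratum_chirotope_equiv[OF N0] chirotope_equiv_trans[OF equiv] by blast
  qed
  then show ?thesis
    unfolding same_orbit_def using t p by blast
qed

theorem mainTheorem2:
  fixes m n :: nat and C D :: "nat set set"
  assumes "1 \<le> m" and "m \<le> n"
    and "C \<subseteq> msubsets m n" and "D \<subseteq> msubsets m n"
    and "\<exists>M. in_stratum m n C M" and "\<exists>N. in_stratum m n D N"
  shows "same_orbit m n C D \<longleftrightarrow>
    (\<forall>M N. in_stratum m n C M \<longrightarrow> in_stratum m n D N \<longrightarrow> antipodal_iso m n M N)"
  using same_orbit_imp_antipodal_iso[OF assms(2)] antipodal_iso_imp_same_orbit assms(5,6) by blast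

end
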